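(* Let $0<\epsilon<1/2$, $0<\rho<1$, $C=1-h(\epsilon)$, $0<R<C$ fixed, and $k=\lfloor Rn\rfloor$. There exists $\delta>0$ such that for every sequence of integers $(i_n)$ with $i_n\in(n(\epsilon-\delta),n(\epsilon+\delta))$, \[ \lim_{n\to\infty}\frac{\sum_{j=0}^{k}\binom{k}{j}\big(1-(1-2\epsilon)(1-2\rho)^j\big)^{i_n}\big(1+(1-2\epsilon)(1-2\rho)^j\big)^{n-i_n}}{2^n\epsilon^{i_n}(1-\epsilon)^{n-i_n}}=1 . \]
   Context: $h(\epsilon)=-\epsilon\log_2\epsilon-(1-\epsilon)\log_2(1-\epsilon)$. *)

theory Defs
  imports "HOL-Analysis.Analysis"
begin

definition bin_entropy :: "real \<Rightarrow> real" where
  "bin_entropy e = - e * log 2 e - (1 - e) * log 2 (1 - e)"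

end

theory Submission
  imports Defs
begin

(*
  With a = 1 - 2\<epsilon> and q_j = (1 - a (1 - 2\<rho>)^j) / 2 we have 1 - a x = 2q, 1 + a x = 2(1 - q),
  so the j-th normalized summand is binom(k,j) times the likelihood ratio exp (L(q_j) - L(\<epsilon>)),
  where L(q) = t ln q + (n - t) ln (1 - q) is the log-likelihood of t = i_n successes in n
  Bernoulli(q) trials.  The term j = 0 (q_0 = \<epsilon>) equals 1; the others tend to 0.  For j \<ge> 1,
  q_j \<ge> q_min = (1 - a|1 - 2\<rho>|)/2 > \<epsilon>, and for t/n near \<epsilon> the log-likelihood decreases on
  [q_min, 1), so each exponent is at most -D n/2 with D > 0 the Kullback-Leibler divergence
  (Gibbs' inequality).  For large j, q_j is near 1/2 and the exponent is about -n (ln 2 - H(\<epsilon>)),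
  which beats the at most 2^(Rn) coefficients since R < 1 - h(\<epsilon>).
*)


definition loglik :: "real \<Rightarrow> real \<Rightarrow> real \<Rightarrow> real" where
  "loglik q t N = t * ln q + (N - t) * ln (1 - q)"

definition logit :: "real \<Rightarrow> real" where
  "logit q = ln q - ln (1 - q)"

text \<open>The log-likelihood is affine in \<open>t\<close>; expanding around \<open>t = e N\<close> separates the
  per-trial expected log-likelihood from the deviation \<open>t - e N\<close>.\<close>

lemma loglik_affine: "loglik q t N = N * loglik q e 1 + (t - e * N) * logit q"
  by (simp add: loglik_def logit_def algebra_simps)

lemma bin_entropy_loglik: "bin_entropy e * ln 2 = - loglik e e 1"
  by (simp add: bin_entropy_def loglik_def log_def field_simps)

lemma gibbs_strict:
  assumes "0 < e" "e < 1" "0 < q" "q < 1" "q \<noteq> e"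
  shows "loglik q e 1 < loglik e e 1"
proof -
  have "ln q - ln e < (q - e) / e" using assms by (intro ln_diff_less) auto
  hence first: "e * (ln q - ln e) < q - e" using assms by (simp add: field_simps)
  have "ln (1 - q) - ln (1 - e) \<le> ((1 - q) - (1 - e)) / (1 - e)" using assms by (intro ln_diff_le) auto
  hence second: "(1 - e) * (ln (1 - q) - ln (1 - e)) \<le> e - q" using assms by (simp add: field_simps)
  show ?thesis using first second by (simp add: loglik_def algebra_simps)
qed

text \<open>If the empirical frequency \<open>t/N\<close> is at most \<open>q0\<close>, the log-likelihood is non-increasing
  in \<open>q\<close> on \<open>[q0, 1)\<close> (concavity: compare with the tangents at \<open>q0\<close>).\<close>

lemma loglik_mono_above_mode:
  assumes "0 < q0" "q0 \<le> q" "q < 1" "0 \<le> t" "t \<le> N * q0"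
  shows "loglik q t N \<le> loglik q0 t N"
proof -
  have "0 \<le> N * q0" using assms by linarith
  hence "0 \<le> N" using assms by (simp add: zero_le_mult_iff)
  hence "N * q0 \<le> N" using assms by (simp add: mult_left_le)
  hence "t \<le> N" using assms by linarith
  have "ln q - ln q0 \<le> (q - q0) / q0" using assms by (intro ln_diff_le) auto
  hence up: "t * (ln q - ln q0) \<le> t * ((q - q0) / q0)" using assms by (intro mult_left_mono) auto
  have "ln (1 - q) - ln (1 - q0) \<le> ((1 - q) - (1 - q0)) / (1 - q0)" using assms by (intro ln_diff_le) auto
  hence down: "(N - t) * (ln (1 - q) - ln (1 - q0)) \<le> (N - t) * ((q0 - q) / (1 - q0))"
    using \<open>t \<le> N\<close> by (intro mult_left_mono) auto
  have "t * (1 - q0) \<le> (N - t) * q0" using assms by (simp add: algebra_simps)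
  hence "t / q0 \<le> (N - t) / (1 - q0)" using assms by (simp add: divide_simps)
  hence "(q - q0) * (t / q0 - (N - t) / (1 - q0)) \<le> 0" using assms by (intro mult_nonneg_nonpos) auto
  moreover have "t * ((q - q0) / q0) + (N - t) * ((q0 - q) / (1 - q0))
      = (q - q0) * (t / q0 - (N - t) / (1 - q0))" by (simp add: algebra_simps diff_divide_distrib)
  ultimately have "t * ((q - q0) / q0) + (N - t) * ((q0 - q) / (1 - q0)) \<le> 0" by simp
  with up down show ?thesis by (simp add: loglik_def algebra_simps)
qed

text \<open>Comparison with the fair coin via the tangents of \<open>ln\<close> at \<open>1/2\<close>.\<close>

lemma loglik_le_uniform:
  assumes "0 < q" "q < 1" "0 \<le> t" "t \<le> N"
  shows "loglik q t N \<le> N * (\<bar>1 - 2 * q\<bar> - ln 2)"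
proof -
  have "ln q - ln (1/2) \<le> (q - 1/2) / (1/2)" using assms by (intro ln_diff_le) auto
  hence a: "ln q \<le> (2 * q - 1) - ln 2" by (simp add: ln_div)
  have "ln (1 - q) - ln (1/2) \<le> ((1 - q) - 1/2) / (1/2)" using assms by (intro ln_diff_le) auto
  hence b: "ln (1 - q) \<le> (1 - 2 * q) - ln 2" by (simp add: ln_div)
  have "loglik q t N \<le> t * ((2 * q - 1) - ln 2) + (N - t) * ((1 - 2 * q) - ln 2)"
    unfolding loglik_def using a b assms by (intro add_mono mult_left_mono) auto
  also have "\<dots> = (N - 2 * t) * (1 - 2 * q) - N * ln 2" by (simp add: algebra_simps)
  also have "\<dots> \<le> N * \<bar>1 - 2 * q\<bar> - N * ln 2"
  proof -
    have "(N - 2 * t) * (1 - 2 * q) \<le> \<bar>N - 2 * t\<bar> * \<bar>1 - 2 * q\<bar>" by (metis abs_ge_self abs_mult)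
    also have "\<dots> \<le> N * \<bar>1 - 2 * q\<bar>" using assms by (intro mult_right_mono) auto
    finally show ?thesis by simp
  qed
  finally show ?thesis by (simp add: algebra_simps)
qed

lemma likelihood_ratio_exp:
  fixes y e t :: real
  assumes "\<bar>y\<bar> < 1" "0 < e" "e < 1"
  shows "(1 - y) powr t * (1 + y) powr (real n - t) / (2 ^ n * e powr t * (1 - e) powr (real n - t))
    = exp (loglik ((1 - y) / 2) t (real n) - loglik e t (real n))"
proof -
  have pos: "0 < 1 - y" "0 < 1 + y" using assms by auto
  have half_minus: "ln ((1 - y) / 2) = ln (1 - y) - ln 2" using pos by (simp add: ln_div)
  have complement: "1 - (1 - y) / 2 = (1 + y) / 2" by (simp add: field_simps)
  have half_plus: "ln (1 - (1 - y) / 2) = ln (1 + y) - ln 2"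
    unfolding complement using pos by (simp add: ln_div)
  have two: "(2::real) ^ n = exp (real n * ln 2)" by (simp add: exp_of_nat_mult)
  have "(1 - y) powr t * (1 + y) powr (real n - t) / (2 ^ n * e powr t * (1 - e) powr (real n - t))
      = exp (t * ln (1 - y) + (real n - t) * ln (1 + y) - (real n * ln 2 + t * ln e + (real n - t) * ln (1 - e)))"
    using pos assms by (simp add: powr_def two exp_add[symmetric] exp_diff[symmetric])
  also have "\<dots> = exp (loglik ((1 - y) / 2) t (real n) - loglik e t (real n))"
    unfolding loglik_def half_minus half_plus by (simp add: algebra_simps)
  finally show ?thesis .
qed

text \<open>Splitting a binomial sum: for \<open>j \<le> J\<close> bound \<open>binom(k,j)\<close> by \<open>N^J\<close>, for \<open>j > J\<close> bound the
  sum of the coefficients by \<open>2^k\<close>.\<close>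

lemma binomial_sum_split_bound:
  fixes E :: "nat \<Rightarrow> real" and k J :: nat and N c w :: real
  assumes "real k \<le> N" "1 \<le> N"
    and small: "\<And>j. 1 \<le> j \<Longrightarrow> j \<le> k \<Longrightarrow> j \<le> J \<Longrightarrow> E j \<le> c"
    and large: "\<And>j. 1 \<le> j \<Longrightarrow> j \<le> k \<Longrightarrow> J < j \<Longrightarrow> E j \<le> w"
  shows "(\<Sum>j=1..k. real (k choose j) * exp (E j)) \<le> N ^ Suc J * exp c + 2 ^ k * exp w"
proof -
  have each_term: "real (k choose j) * exp (E j) \<le> N ^ J * exp c + real (k choose j) * exp w"
    if j: "j \<in> {1..k}" for j
  proof (cases "j \<le> J")
    case True
    have "real (k choose j) \<le> real k ^ j" using binomial_le_pow[of j k] j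
      by (metis atLeastAtMost_iff of_nat_le_iff of_nat_power)
    also have "\<dots> \<le> N ^ j" using assms by (intro power_mono) auto
    also have "\<dots> \<le> N ^ J" using True assms by (intro power_increasing) auto
    finally have "real (k choose j) * exp (E j) \<le> N ^ J * exp c"
      using small[of j] j True by (intro mult_mono) auto
    thus ?thesis by (simp add: add_increasing2)
  next
    case False
    hence "real (k choose j) * exp (E j) \<le> real (k choose j) * exp w"
      using large[of j] j by (intro mult_left_mono) auto
    thus ?thesis using assms by (simp add: add_increasing)
  qed
  have "(\<Sum>j=1..k. real (k choose j) * exp (E j)) \<le> (\<Sum>j=1..k. N ^ J * exp c + real (k choose j) * exp w)"
    by (intro sum_mono each_term)
  also have "\<dots> = real k * (N ^ J * exp c) + (\<Sum>j=1..k. real (k choose j)) * exp w"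
    by (simp add: sum.distrib sum_distrib_right)
  also have "\<dots> \<le> N ^ Suc J * exp c + 2 ^ k * exp w"
  proof (rule add_mono)
    show "real k * (N ^ J * exp c) \<le> N ^ Suc J * exp c"
      using assms by (simp add: mult_right_mono mult.assoc)
    have "(\<Sum>j=1..k. real (k choose j)) \<le> (\<Sum>j\<le>k. real (k choose j))" by (intro sum_mono2) auto
    also have "\<dots> = 2 ^ k" by (simp only: of_nat_sum[symmetric] choose_row_sum) simp
    finally show "(\<Sum>j=1..k. real (k choose j)) * exp w \<le> 2 ^ k * exp w" by simp
  qed
  finally show ?thesis .
qed

lemma power_times_exp_decay:
  fixes c :: real assumes "0 < c"
  shows "(\<lambda>n. real n ^ m * exp (- c * real n)) \<longlonglongrightarrow> 0"
proof -
  have "filterlim (\<lambda>n. c * real n) at_top sequentially"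
    using assms by (intro filterlim_tendsto_pos_mult_at_top[OF tendsto_const] filterlim_real_sequentially)
  hence "(\<lambda>n. (c * real n) ^ m / exp (c * real n)) \<longlonglongrightarrow> 0"
    by (rule filterlim_compose[OF tendsto_power_div_exp_0])
  hence "(\<lambda>n. (c * real n) ^ m / exp (c * real n) / c ^ m) \<longlonglongrightarrow> 0"
    by (rule tendsto_divide_zero)
  thus ?thesis using assms by (simp add: power_mult_distrib exp_minus field_simps)
qed

locale bsc_setting =
  fixes \<epsilon> \<rho> R :: real
  assumes eps: "0 < \<epsilon>" "\<epsilon> < 1/2" and rho: "0 < \<rho>" "\<rho> < 1"
    and rate: "0 < R" "R < 1 - bin_entropy \<epsilon>"
begin

text \<open>\<open>q j\<close> is the Bernoulli parameter of the \<open>j\<close>-th summand; for \<open>j \<ge> 1\<close> it lies in \<open>[q_min, 1)\<close>.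
  The two margins are the exponential rates that make the tail vanish, and \<open>\<delta>\<close> is small
  enough that a deviation \<open>|t - \<epsilon> N| \<le> \<delta> N\<close> costs at most a fraction of each margin.\<close>

definition \<beta> :: real where "\<beta> = \<bar>1 - 2*\<rho>\<bar>"

definition q :: "nat \<Rightarrow> real" where "q j = (1 - (1 - 2*\<epsilon>) * (1 - 2*\<rho>) ^ j) / 2"

definition q_min :: real where "q_min = (1 - (1 - 2*\<epsilon>) * \<beta>) / 2"

definition kl_margin :: real where "kl_margin = loglik \<epsilon> \<epsilon> 1 - loglik q_min \<epsilon> 1"

definition rate_margin :: real where "rate_margin = (1 - R) * ln 2 + loglik \<epsilon> \<epsilon> 1"

definition \<delta> :: real where
  "\<delta> = min (min \<epsilon> (q_min - \<epsilon>))
      (min (kl_margin / (2 * (\<bar>logit q_min - logit \<epsilon>\<bar> + 1))) (rate_margin / (4 * (\<bar>logit \<epsilon>\<bar> + 1))))"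

lemma beta_bounds: "0 \<le> \<beta>" "\<beta> < 1"
  using rho by (auto simp: \<beta>_def)

lemma abs_one_minus_two_q: "\<bar>1 - 2 * q j\<bar> = (1 - 2*\<epsilon>) * \<beta> ^ j"
proof -
  have "1 - 2 * q j = (1 - 2*\<epsilon>) * (1 - 2*\<rho>) ^ j" by (simp add: q_def field_simps)
  thus ?thesis using eps by (simp add: \<beta>_def abs_mult power_abs)
qed

lemma q_deviation: "\<bar>1 - 2 * q j\<bar> \<le> \<beta> ^ j"
  unfolding abs_one_minus_two_q using eps beta_bounds by (intro mult_left_le_one_le) auto

lemma q_bounds: "0 < q j" "q j < 1"
proof -
  have "\<beta> ^ j \<le> 1" using beta_bounds by (simp add: power_le_one)
  hence "(1 - 2*\<epsilon>) * \<beta> ^ j \<le> 1 - 2*\<epsilon>" using eps by (simp add: mult_left_le)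
  hence "\<bar>1 - 2 * q j\<bar> < 1" unfolding abs_one_minus_two_q using eps by linarith
  thus "0 < q j" "q j < 1" by auto
qed

lemma q_zero: "q 0 = \<epsilon>"
  by (simp add: q_def)

lemma q_min_le_q:
  assumes "1 \<le> j" shows "q_min \<le> q j"
proof -
  have "\<beta> ^ j \<le> \<beta>" using power_decreasing[of 1 j \<beta>] assms beta_bounds by simp
  hence "\<bar>1 - 2 * q j\<bar> \<le> (1 - 2*\<epsilon>) * \<beta>"
    unfolding abs_one_minus_two_q using eps by (simp add: mult_left_mono)
  thus ?thesis by (simp add: q_min_def)
qed

lemma q_min_above_eps: "\<epsilon> < q_min"
proof -
  have "(1 - 2*\<epsilon>) * \<beta> < 1 - 2*\<epsilon>" using eps beta_bounds by simp
  thus ?thesis by (simp add: q_min_def)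
qed

lemma kl_margin_pos: "0 < kl_margin"
  using gibbs_strict[of \<epsilon> q_min] q_min_above_eps eps q_bounds[of 1] q_min_le_q[of 1]
  by (simp add: kl_margin_def)

lemma entropy_nonneg: "loglik \<epsilon> \<epsilon> 1 \<le> 0"
  using eps by (simp add: loglik_def mult_nonneg_nonpos add_nonpos_nonpos)

lemma rate_margin_pos: "0 < rate_margin"
proof -
  have "R * ln 2 < (1 - bin_entropy \<epsilon>) * ln 2" using rate by simp
  thus ?thesis using bin_entropy_loglik[of \<epsilon>] by (simp add: rate_margin_def algebra_simps)
qed

lemma rate_below_one: "R < 1"
proof -
  have "0 < (1 - R) * ln 2" using rate_margin_pos entropy_nonneg by (simp add: rate_margin_def)
  thus ?thesis by (simp add: zero_less_mult_iff)
qed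

lemma delta_pos: "0 < \<delta>"
proof -
  have "0 < kl_margin / (2 * (\<bar>logit q_min - logit \<epsilon>\<bar> + 1))"
    "0 < rate_margin / (4 * (\<bar>logit \<epsilon>\<bar> + 1))"
    using kl_margin_pos rate_margin_pos by (intro divide_pos_pos mult_pos_pos; simp)+
  thus ?thesis using eps q_min_above_eps by (simp add: \<delta>_def)
qed

lemma delta_le: "\<delta> \<le> \<epsilon>" "\<delta> \<le> q_min - \<epsilon>"
  "\<delta> * \<bar>logit q_min - logit \<epsilon>\<bar> \<le> kl_margin / 2" "\<delta> * \<bar>logit \<epsilon>\<bar> \<le> rate_margin / 4"
proof -
  show "\<delta> \<le> \<epsilon>" "\<delta> \<le> q_min - \<epsilon>" by (simp_all add: \<delta>_def)
  have "\<delta> \<le> kl_margin / (2 * (\<bar>logit q_min - logit \<epsilon>\<bar> + 1))" by (simp add: \<delta>_def)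
  hence "\<delta> * (2 * (\<bar>logit q_min - logit \<epsilon>\<bar> + 1)) \<le> kl_margin"
    by (subst (asm) pos_le_divide_eq) (auto intro!: add_nonneg_pos)
  thus "\<delta> * \<bar>logit q_min - logit \<epsilon>\<bar> \<le> kl_margin / 2" using delta_pos by (simp add: algebra_simps)
  have "\<delta> \<le> rate_margin / (4 * (\<bar>logit \<epsilon>\<bar> + 1))" by (simp add: \<delta>_def)
  hence "\<delta> * (4 * (\<bar>logit \<epsilon>\<bar> + 1)) \<le> rate_margin"
    by (subst (asm) pos_le_divide_eq) (auto intro!: add_nonneg_pos)
  thus "\<delta> * \<bar>logit \<epsilon>\<bar> \<le> rate_margin / 4" using delta_pos by (simp add: algebra_simps)
qed

lemma deviation_range:
  assumes "0 \<le> N" "\<bar>t - \<epsilon> * N\<bar> \<le> \<delta> * N"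
  shows "0 \<le> t" "t \<le> N * q_min"
proof -
  have "\<delta> * N \<le> \<epsilon> * N" "\<delta> * N \<le> (q_min - \<epsilon>) * N"
    using delta_le assms by (simp_all add: mult_right_mono)
  thus "0 \<le> t" "t \<le> N * q_min" using assms by (auto simp: algebra_simps abs_le_iff)
qed

lemma exponent_bound_small_j:
  assumes "1 \<le> j" "0 \<le> N" "\<bar>t - \<epsilon> * N\<bar> \<le> \<delta> * N"
  shows "loglik (q j) t N - loglik \<epsilon> t N \<le> - (kl_margin / 2) * N"
proof -
  have "loglik (q j) t N \<le> loglik q_min t N"
    using deviation_range[OF assms(2,3)] q_min_le_q[OF assms(1)] q_bounds q_min_above_eps eps
    by (intro loglik_mono_above_mode) auto
  moreover have "loglik q_min t N - loglik \<epsilon> t N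
      = - kl_margin * N + (t - \<epsilon> * N) * (logit q_min - logit \<epsilon>)"
    using loglik_affine[of q_min t N \<epsilon>] loglik_affine[of \<epsilon> t N \<epsilon>]
    by (simp add: kl_margin_def algebra_simps)
  moreover have "(t - \<epsilon> * N) * (logit q_min - logit \<epsilon>) \<le> (kl_margin / 2) * N"
  proof -
    have "(t - \<epsilon> * N) * (logit q_min - logit \<epsilon>) \<le> \<bar>t - \<epsilon> * N\<bar> * \<bar>logit q_min - logit \<epsilon>\<bar>"
      by (metis abs_ge_self abs_mult)
    also have "\<dots> \<le> (\<delta> * N) * \<bar>logit q_min - logit \<epsilon>\<bar>"
      using assms(3) by (intro mult_right_mono) auto
    also have "\<dots> = (\<delta> * \<bar>logit q_min - logit \<epsilon>\<bar>) * N" by simp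
    also have "\<dots> \<le> (kl_margin / 2) * N" using delta_le(3) assms(2) by (rule mult_right_mono)
    finally show ?thesis .
  qed
  ultimately show ?thesis by linarith
qed

text \<open>For large \<open>j\<close> the exponent is close to \<open>-(ln 2 - H(\<epsilon>)) N\<close>, enough to absorb \<open>2^(R N)\<close>.\<close>

lemma exponent_bound_large_j:
  assumes "0 \<le> N" "\<bar>t - \<epsilon> * N\<bar> \<le> \<delta> * N"
  shows "loglik (q j) t N - loglik \<epsilon> t N \<le> (\<beta> ^ j - R * ln 2 - 3/4 * rate_margin) * N"
proof -
  have "q_min < 1" using q_min_le_q[of 1] q_bounds(2)[of 1] by simp
  hence "N * q_min \<le> N" using assms(1) by (simp add: mult_left_le)
  hence "t \<le> N" using deviation_range[OF assms] by simp
  hence "loglik (q j) t N \<le> N * (\<bar>1 - 2 * q j\<bar> - ln 2)"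
    using deviation_range[OF assms] q_bounds by (intro loglik_le_uniform) auto
  also have "\<dots> \<le> N * (\<beta> ^ j - ln 2)" using q_deviation assms(1) by (intro mult_left_mono) auto
  finally have upper: "loglik (q j) t N \<le> N * (\<beta> ^ j - ln 2)" .
  have "- loglik \<epsilon> t N = - N * loglik \<epsilon> \<epsilon> 1 - (t - \<epsilon> * N) * logit \<epsilon>"
    using loglik_affine[of \<epsilon> t N \<epsilon>] by simp
  also have "\<dots> \<le> - N * loglik \<epsilon> \<epsilon> 1 + (rate_margin / 4) * N"
  proof -
    have "- (t - \<epsilon> * N) * logit \<epsilon> \<le> \<bar>t - \<epsilon> * N\<bar> * \<bar>logit \<epsilon>\<bar>"
      by (metis abs_ge_self abs_minus_cancel abs_mult)
    also have "\<dots> \<le> (\<delta> * N) * \<bar>logit \<epsilon>\<bar>"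
      using assms(2) by (intro mult_right_mono) auto
    also have "\<dots> = (\<delta> * \<bar>logit \<epsilon>\<bar>) * N" by simp
    also have "\<dots> \<le> (rate_margin / 4) * N" using delta_le(4) assms(1) by (rule mult_right_mono)
    finally show ?thesis by linarith
  qed
  finally show ?thesis using upper by (simp add: rate_margin_def algebra_simps)
qed

lemma tail_bound:
  assumes J: "\<beta> ^ J \<le> rate_margin / 4"
    and N: "1 \<le> N" and k: "real k \<le> R * N" and t: "\<bar>t - \<epsilon> * N\<bar> \<le> \<delta> * N"
  shows "(\<Sum>j=1..k. real (k choose j) * exp (loglik (q j) t N - loglik \<epsilon> t N))
    \<le> N ^ Suc J * exp (- (kl_margin / 2) * N) + exp (- (rate_margin / 2) * N)"
proof -
  have "R * N \<le> 1 * N" using rate_below_one N by (intro mult_right_mono) auto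
  hence "real k \<le> N" using k by simp
  have large: "loglik (q j) t N - loglik \<epsilon> t N \<le> - (R * ln 2 + rate_margin / 2) * N" if "J < j" for j
  proof -
    have "\<beta> ^ j \<le> \<beta> ^ J" using that beta_bounds by (intro power_decreasing) auto
    hence "\<beta> ^ j - R * ln 2 - 3/4 * rate_margin \<le> - (R * ln 2 + rate_margin / 2)" using J by simp
    hence "(\<beta> ^ j - R * ln 2 - 3/4 * rate_margin) * N \<le> - (R * ln 2 + rate_margin / 2) * N"
      using N by (intro mult_right_mono) auto
    thus ?thesis using exponent_bound_large_j[of N t j] N t by linarith
  qed
  have "(\<Sum>j=1..k. real (k choose j) * exp (loglik (q j) t N - loglik \<epsilon> t N))
      \<le> N ^ Suc J * exp (- (kl_margin / 2) * N) + 2 ^ k * exp (- (R * ln 2 + rate_margin / 2) * N)"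
    using \<open>real k \<le> N\<close> N t exponent_bound_small_j large
    by (intro binomial_sum_split_bound) auto
  also have "(2::real) ^ k * exp (- (R * ln 2 + rate_margin / 2) * N) \<le> exp (- (rate_margin / 2) * N)"
  proof -
    have "(2::real) ^ k = exp (real k * ln 2)" by (simp add: exp_of_nat_mult)
    also have "\<dots> \<le> exp (R * N * ln 2)" using k by simp
    finally have "(2::real) ^ k * exp (- (R * ln 2 + rate_margin / 2) * N)
        \<le> exp (R * N * ln 2) * exp (- (R * ln 2 + rate_margin / 2) * N)" by simp
    also have "\<dots> = exp (- (rate_margin / 2) * N)" by (simp add: exp_add[symmetric] algebra_simps)
    finally show ?thesis .
  qed
  finally show ?thesis by simp
qed

lemma normalized_sum_eq:
  "(\<Sum>j=0..k. real (k choose j)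
        * (1 - (1 - 2*\<epsilon>) * (1 - 2*\<rho>) ^ j) powr t
        * (1 + (1 - 2*\<epsilon>) * (1 - 2*\<rho>) ^ j) powr (real n - t))
      / (2 ^ n * \<epsilon> powr t * (1 - \<epsilon>) powr (real n - t))
    = 1 + (\<Sum>j=1..k. real (k choose j) * exp (loglik (q j) t (real n) - loglik \<epsilon> t (real n)))"
proof -
  have ratio: "(1 - (1 - 2*\<epsilon>) * (1 - 2*\<rho>) ^ j) powr t * (1 + (1 - 2*\<epsilon>) * (1 - 2*\<rho>) ^ j) powr (real n - t)
      / (2 ^ n * \<epsilon> powr t * (1 - \<epsilon>) powr (real n - t))
    = exp (loglik (q j) t (real n) - loglik \<epsilon> t (real n))" for j
  proof -
    have "1 - 2 * q j = (1 - 2*\<epsilon>) * (1 - 2*\<rho>) ^ j" by (simp add: q_def field_simps)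
    hence "\<bar>(1 - 2*\<epsilon>) * (1 - 2*\<rho>) ^ j\<bar> < 1" using q_bounds[of j] by auto
    from likelihood_ratio_exp[OF this, of \<epsilon> t n] eps show ?thesis by (simp add: q_def)
  qed
  have "(\<Sum>j=0..k. real (k choose j)
        * (1 - (1 - 2*\<epsilon>) * (1 - 2*\<rho>) ^ j) powr t
        * (1 + (1 - 2*\<epsilon>) * (1 - 2*\<rho>) ^ j) powr (real n - t))
      / (2 ^ n * \<epsilon> powr t * (1 - \<epsilon>) powr (real n - t))
    = (\<Sum>j=0..k. real (k choose j) * exp (loglik (q j) t (real n) - loglik \<epsilon> t (real n)))"
    unfolding sum_divide_distrib by (intro sum.cong refl) (simp add: ratio[symmetric] mult.assoc)
  also have "\<dots> = 1 + (\<Sum>j=1..k. real (k choose j) * exp (loglik (q j) t (real n) - loglik \<epsilon> t (real n)))"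
    by (simp add: sum.atLeast_Suc_atMost q_zero)
  finally show ?thesis .
qed

lemma normalized_sum_tendsto_one:
  fixes i :: "nat \<Rightarrow> int"
  assumes "\<forall>\<^sub>F n in sequentially. real n * (\<epsilon> - \<delta>) < of_int (i n) \<and> of_int (i n) < real n * (\<epsilon> + \<delta>)"
  shows "(\<lambda>n. (\<Sum>j=0..nat \<lfloor>R * real n\<rfloor>. real (nat \<lfloor>R * real n\<rfloor> choose j)
          * (1 - (1 - 2*\<epsilon>) * (1 - 2*\<rho>) ^ j) powr (of_int (i n))
          * (1 + (1 - 2*\<epsilon>) * (1 - 2*\<rho>) ^ j) powr (real n - of_int (i n)))
        / (2 ^ n * \<epsilon> powr (of_int (i n)) * (1 - \<epsilon>) powr (real n - of_int (i n))))
      \<longlonglongrightarrow> 1" (is "?ratio \<longlonglongrightarrow> 1")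
proof -
  obtain J where J: "\<beta> ^ J \<le> rate_margin / 4"
    using real_arch_pow_inv[of "rate_margin / 4" \<beta>] rate_margin_pos beta_bounds by (auto intro: less_imp_le)
  define tail where "tail n = (\<Sum>j=1..nat \<lfloor>R * real n\<rfloor>. real (nat \<lfloor>R * real n\<rfloor> choose j)
      * exp (loglik (q j) (of_int (i n)) (real n) - loglik \<epsilon> (of_int (i n)) (real n)))" for n
  define bound where "bound n = real n ^ Suc J * exp (- (kl_margin / 2) * real n)
      + exp (- (rate_margin / 2) * real n)" for n
  have eventually_bounded: "\<forall>\<^sub>F n in sequentially. ?ratio n = 1 + tail n \<and> 0 \<le> tail n \<and> tail n \<le> bound n"
    using assms
  proof eventually_elim
    case (elim n)
    hence n: "1 \<le> real n" by (cases "n = 0") auto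
    have t: "\<bar>of_int (i n) - \<epsilon> * real n\<bar> \<le> \<delta> * real n"
      using elim by (simp add: algebra_simps abs_le_iff)
    have k: "real (nat \<lfloor>R * real n\<rfloor>) \<le> R * real n" using rate by simp
    have "tail n \<le> bound n" unfolding tail_def bound_def using tail_bound[OF J n k t] by simp
    moreover have "0 \<le> tail n" unfolding tail_def by (intro sum_nonneg) simp
    moreover have "?ratio n = 1 + tail n" unfolding tail_def by (rule normalized_sum_eq)
    ultimately show ?case by blast
  qed
  have "(\<lambda>n. real n ^ 0 * exp (- (rate_margin / 2) * real n)) \<longlonglongrightarrow> 0"
    using rate_margin_pos by (intro power_times_exp_decay) auto
  hence bound_lim: "bound \<longlonglongrightarrow> 0"
    unfolding bound_def using kl_margin_pos by (intro tendsto_add_zero power_times_exp_decay) auto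
  have tail_nonneg: "\<forall>\<^sub>F n in sequentially. 0 \<le> tail n"
    and tail_le: "\<forall>\<^sub>F n in sequentially. tail n \<le> bound n"
    and ratio_eq: "\<forall>\<^sub>F n in sequentially. 1 + tail n = ?ratio n"
    by (rule eventually_mono[OF eventually_bounded]; simp only:)+
  from tail_nonneg tail_le have "tail \<longlonglongrightarrow> 0"
    by (rule tendsto_sandwich[OF _ _ tendsto_const bound_lim])
  hence "(\<lambda>n. 1 + tail n) \<longlonglongrightarrow> 1"
    using tendsto_add[OF tendsto_const, of tail 0 sequentially 1] by simp
  thus ?thesis using ratio_eq by (rule Lim_transform_eventually)
qed

end

theorem lemma2:
  fixes \<epsilon> \<rho> R :: real
  assumes "0 < \<epsilon>" "\<epsilon> < 1/2" "0 < \<rho>" "\<rho> < 1"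
    and "0 < R" "R < 1 - bin_entropy \<epsilon>"
  shows "\<exists>\<delta>>0. \<forall>i :: nat \<Rightarrow> int.
    (\<forall>\<^sub>F n in sequentially. real n * (\<epsilon> - \<delta>) < of_int (i n) \<and> of_int (i n) < real n * (\<epsilon> + \<delta>)) \<longrightarrow>
    ((\<lambda>n. (\<Sum>j=0..nat \<lfloor>R * real n\<rfloor>. real (nat \<lfloor>R * real n\<rfloor> choose j)
          * (1 - (1 - 2*\<epsilon>) * (1 - 2*\<rho>) ^ j) powr (of_int (i n))
          * (1 + (1 - 2*\<epsilon>) * (1 - 2*\<rho>) ^ j) powr (real n - of_int (i n)))
        / (2 ^ n * \<epsilon> powr (of_int (i n)) * (1 - \<epsilon>) powr (real n - of_int (i n))))
      \<longlonglongrightarrow> 1)"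
proof -
  interpret bsc_setting \<epsilon> \<rho> R using assms by unfold_locales
  show ?thesis by (intro exI[of _ \<delta>] conjI allI impI delta_pos normalized_sum_tendsto_one)
qed

end
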